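(* Let $N=(a_1,\dots,a_s)\in\mathbb{N}_0^s$ be an $s$-tuple of non-negative integers, and for an integer $b\ge 0$ let $N+b=(a_1,\dots,a_s,b)$. For every tuple $M$ write $n_j(M)=\#\{a\in M\mid a\le j\}$ (counted with multiplicity) and $p(M)=\max\{j\mid \sum_{a\in M,\,a\le j}(j+1-a)\le j\}$, assumed to exist. Then: (a) $p(N+b)\le p(N)$ for every integer $b\ge 0$; (b) if $p=p(N)\ge 2$, $n_{p-1}(N)=0$ and $n_p(N)\le 1$, then $p(N+b)=p$ for every integer $b\ge 2$.
   Context: Sums over empty index sets are zero; entries of tuples are counted with multiplicity. *)

theory Defs
  imports Main
begin

(* A tuple N = (a_1,...,a_s) of non-negative integers is a list of naturals;
   N + b is N @ [b]. Entries are counted with multiplicity. *)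

definition n_le :: "nat list \<Rightarrow> nat \<Rightarrow> nat" where
  "n_le M j = length (filter (\<lambda>a. a \<le> j) M)"

definition defect :: "nat list \<Rightarrow> nat \<Rightarrow> nat" where
  "defect M j = sum_list (map (\<lambda>a. j + 1 - a) (filter (\<lambda>a. a \<le> j) M))"

definition Pset :: "nat list \<Rightarrow> nat set" where
  "Pset M = {j. defect M j \<le> j}"

(* p(M) exists: the set is nonempty and bounded above *)
definition p_exists :: "nat list \<Rightarrow> bool" where
  "p_exists M \<longleftrightarrow> Pset M \<noteq> {} \<and> finite (Pset M)"

definition pM :: "nat list \<Rightarrow> nat" where
  "pM M = Max (Pset M)"

end

theory Submission
  imports Defs
begin

text \<open>Appending an entry b can only increase every defect, so the admissible set shrinks and
  its maximum can only drop. If no entry of N is below p and at most one equals p, the defect of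
  N at p is at most 1, and an extra entry b \<ge> 2 adds at most p - 1; so p stays admissible.\<close>

lemma defect_append_singleton:
  "defect (M @ [b]) j = defect M j + (if b \<le> j then j + 1 - b else 0)"
  by (simp add: defect_def)

lemma Pset_append_singleton_subset: "Pset (M @ [b]) \<subseteq> Pset M"
  by (auto simp: Pset_def defect_append_singleton)

lemma pM_append_singleton_le:
  assumes "p_exists M" and "p_exists (M @ [b])"
  shows "pM (M @ [b]) \<le> pM M"
  using assms Pset_append_singleton_subset[of M b]
  unfolding p_exists_def pM_def by (meson Max_mono)

lemma pM_append_singleton_eq:
  assumes "p_exists M" and "pM M \<in> Pset (M @ [b])"
  shows "p_exists (M @ [b])" and "pM (M @ [b]) = pM M"
proof -
  have "finite (Pset (M @ [b]))"
    using assms(1) Pset_append_singleton_subset finite_subset unfolding p_exists_def by blast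
  with assms(2) show ex: "p_exists (M @ [b])"
    unfolding p_exists_def by blast
  have "pM M \<le> pM (M @ [b])"
    using assms(2) \<open>finite (Pset (M @ [b]))\<close> unfolding pM_def by simp
  with pM_append_singleton_le[OF assms(1) ex] show "pM (M @ [b]) = pM M"
    by simp
qed

lemma defect_le_n_le:
  assumes "n_le M (j - 1) = 0"
  shows "defect M j \<le> n_le M j"
proof -
  have "\<forall>a\<in>set M. j - 1 < a"
    using assms by (auto simp: n_le_def filter_empty_conv)
  then have "(\<Sum>a\<leftarrow>filter (\<lambda>a. a \<le> j) M. j + 1 - a) \<le> (\<Sum>a\<leftarrow>filter (\<lambda>a. a \<le> j) M. 1)"
    by (intro sum_list_mono) auto
  then show ?thesis
    by (simp add: defect_def n_le_def sum_list_triv)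
qed

lemma mem_Pset_append_singleton:
  assumes "n_le M (j - 1) = 0" and "n_le M j \<le> 1" and "1 \<le> j" and "2 \<le> b"
  shows "j \<in> Pset (M @ [b])"
proof -
  have "defect M j \<le> 1"
    using defect_le_n_le[OF assms(1)] assms(2) by simp
  with assms(3,4) show ?thesis
    by (auto simp: Pset_def defect_append_singleton)
qed

theorem lemma4p7:
  fixes N :: "nat list"
  shows "(\<forall>b::nat. p_exists N \<and> p_exists (N @ [b]) \<longrightarrow> pM (N @ [b]) \<le> pM N)
       \<and> (p_exists N \<and> pM N \<ge> 2 \<and> n_le N (pM N - 1) = 0 \<and> n_le N (pM N) \<le> 1
          \<longrightarrow> (\<forall>b::nat. b \<ge> 2 \<longrightarrow> p_exists (N @ [b]) \<and> pM (N @ [b]) = pM N))"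
proof (intro conjI allI impI)
  fix b
  assume "p_exists N \<and> p_exists (N @ [b])"
  then show "pM (N @ [b]) \<le> pM N"
    using pM_append_singleton_le by blast
next
  fix b :: nat
  assume hyps: "p_exists N \<and> pM N \<ge> 2 \<and> n_le N (pM N - 1) = 0 \<and> n_le N (pM N) \<le> 1"
    and "b \<ge> 2"
  then have "pM N \<in> Pset (N @ [b])"
    using mem_Pset_append_singleton[of N "pM N" b] by auto
  with hyps show "p_exists (N @ [b])" and "pM (N @ [b]) = pM N"
    using pM_append_singleton_eq by blast+
qed

end
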